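(* Under the hypotheses of Theorem 1 (stated in the context), with probability one there exists $n_0$ such that for all $n\ge n_0$, denoting by $\hat m_{n,1}<\dots<\hat m_{n,r-1}$ the local minimizers of $\hat f_n$ in $(a,b)$ and by $F$ the distribution function of $P$, $$d_P(\widehat{\mathscr C}_n,\mathscr C_0)=\sum_{j=1}^{r-1}\bigl|F(\hat m_{n,j})-F(m_j)\bigr|.$$
   Context: Hypotheses: $P$ is a probability distribution on $\mathbb R$ with density $f$, $f=0$ outside $[a,b]$ ($a<b$), $f|_{[a,b]}$ is three times continuously differentiable on $[a,b]$, $f'(a)\ne0$, $f'(b)\ne0$, $f$ has finitely many critical points in $(a,b)$, all with $f''\neq0$; $m_1<\dots<m_{r-1}$ are the local minimizers of $f$ in $(a,b)$. $(\hat f_n)$ are random functions, each twice continuously differentiable on $[a,b]$, with $\sup_{[a,b]}|\hat f_n^{(j)}-f^{(j)}|\to0$ almost surely for $j=1,2$. Modal clustering induced by $g$: if $g$ has finitely many local minimizers $\mu_1<\dots<\mu_k$ in $(a,b)$, it is $\{(-\infty,\mu_1),(\mu_1,\mu_2),\dots,(\mu_k,\infty)\}$; $\mathscr C_0$ and $\widehat{\mathscr C}_n$ are those induced by $f$ and $\hat f_n$. For $P$-clusterings $\mathscr C=\{C_1,\dots,C_r\}$, $\mathscr D=\{D_1,\dots,D_s\}$ with $r\le s$, put $C_i=\varnothing$ for $r<i\le s$ and $d_P(\mathscr C,\mathscr D)=\frac12\min_\sigma\sum_{i=1}^sP(C_i\triangle D_{\sigma(i)})$ over permutations $\sigma$ of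 $\{1,\dots,s\}$. *)

theory Defs
  imports "HOL-Probability.Probability" "HOL-Combinatorics.Permutations"
begin

definition loc_minimizers :: "(real \<Rightarrow> real) \<Rightarrow> real \<Rightarrow> real \<Rightarrow> real set" where
  "loc_minimizers g a b =
     {x \<in> {a<..<b}. \<exists>e>0. \<forall>y. \<bar>y - x\<bar> < e \<longrightarrow> g x \<le> g y}"

definition modal_clustering :: "(real \<Rightarrow> real) \<Rightarrow> real \<Rightarrow> real \<Rightarrow> real set list" where
  "modal_clustering g a b =
     (let mu = sorted_list_of_set (loc_minimizers g a b); k = length mu
      in map (\<lambda>i. {x. (i = 0 \<or> mu ! (i - 1) < x) \<and> (i = k \<or> x < mu ! i)}) [0..<k+1])"

definition clust_dist :: "real measure \<Rightarrow> real set list \<Rightarrow> real set list \<Rightarrow> real" where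
  "clust_dist P Cs Ds =
     (let s = max (length Cs) (length Ds);
          C = (\<lambda>i. if i < length Cs then Cs ! i else {});
          D = (\<lambda>i. if i < length Ds then Ds ! i else {})
      in (1/2) * Min ((\<lambda>\<sigma>. \<Sum>i<s. measure P ((C i - D (\<sigma> i)) \<union> (D (\<sigma> i) - C i)))
                       ` {\<sigma>. \<sigma> permutes {..<s}}))"

end

theory Submission
  imports Defs
begin

text \<open>For large \<open>n\<close>, uniform closeness of the first two derivatives of \<open>fhat_n\<close> to those of
  \<open>f\<close> pins down the local minimizers of \<open>fhat_n\<close>. Away from the critical points of \<open>f\<close> the
  derivative \<open>fhat_n'\<close> cannot vanish; near a nondegenerate critical point \<open>z\<close> the second
  derivative \<open>fhat_n''\<close> has the sign of \<open>f''(z)\<close>, so there \<open>fhat_n\<close> has a local minimizer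
  only if \<open>z\<close> is one, and then exactly one, since \<open>fhat_n'\<close> increases through \<open>0\<close> once. Hence
  the local minimizers of \<open>fhat_n\<close> correspond, in increasing order, to those of \<open>f\<close>, each
  within a small \<open>\<delta>\<close> of its partner, and the cells of the two modal clusterings are intervals
  with nearby endpoints. As \<open>P\<close> has no atoms and lives on \<open>(a, b)\<close>, matching the \<open>i\<close>-th cell
  with the \<open>i\<close>-th cell costs \<open>2 \<Sum>\<^sub>j |F(mhat_j) - F(m_j)|\<close>, which is \<open>O(\<delta>)\<close> because \<open>F\<close>
  is Lipschitz, while every other matching pairs some cell with a disjoint one and pays
  almost the mass of a whole cell. So the identity matching is optimal.\<close>

section \<open>Second derivative test\<close>

lemma DERIV_at_if_within_Icc:
  fixes g :: "real \<Rightarrow> real"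
  assumes "x \<in> {a<..<b}" "(g has_real_derivative D) (at x within {a..b})"
  shows "(g has_real_derivative D) (at x)"
  using assms at_within_interior[of x "{a..b}"] by (simp add: interior_atLeastAtMost_real)

lemma continuous_on_if_DERIV_within:
  assumes "\<And>x. x \<in> S \<Longrightarrow> (g has_real_derivative g' x) (at x within S)"
  shows "continuous_on S g"
  using assms DERIV_continuous continuous_on_eq_continuous_within by blast

lemma DERIV_pos_imp_less:
  fixes g g' :: "real \<Rightarrow> real"
  assumes "u < v" and deriv: "\<And>t. u \<le> t \<Longrightarrow> t \<le> v \<Longrightarrow> (g has_real_derivative g' t) (at t)"
    and pos: "\<And>t. u < t \<Longrightarrow> t < v \<Longrightarrow> 0 < g' t"
  shows "g u < g v"
proof (rule DERIV_pos_imp_increasing_open[OF \<open>u < v\<close>])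
  show "\<exists>y. (g has_real_derivative y) (at t) \<and> 0 < y" if "u < t" "t < v" for t
    using deriv[of t] pos[of t] that by auto
  show "continuous_on {u..v} g"
    by (intro continuous_at_imp_continuous_on ballI) (metis DERIV_isCont atLeastAtMost_iff deriv)
qed

lemma DERIV_neg_imp_greater:
  fixes g g' :: "real \<Rightarrow> real"
  assumes "u < v" and deriv: "\<And>t. u \<le> t \<Longrightarrow> t \<le> v \<Longrightarrow> (g has_real_derivative g' t) (at t)"
    and neg: "\<And>t. u < t \<Longrightarrow> t < v \<Longrightarrow> g' t < 0"
  shows "g v < g u"
proof (rule DERIV_neg_imp_decreasing_open[OF \<open>u < v\<close>])
  show "\<exists>y. (g has_real_derivative y) (at t) \<and> y < 0" if "u < t" "t < v" for t
    using deriv[of t] neg[of t] that by auto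
  show "continuous_on {u..v} g"
    by (intro continuous_at_imp_continuous_on ballI) (metis DERIV_isCont atLeastAtMost_iff deriv)
qed

lemma strict_local_min_if_deriv2_pos:
  fixes g g' :: "real \<Rightarrow> real"
  assumes "open S" "x \<in> S"
    and g': "\<And>t. t \<in> S \<Longrightarrow> (g has_real_derivative g' t) (at t)"
    and g'': "(g' has_real_derivative D) (at x)"
    and "g' x = 0" "0 < D"
  shows "\<exists>e>0. \<forall>y. y \<noteq> x \<and> \<bar>y - x\<bar> < e \<longrightarrow> g x < g y"
proof -
  obtain r where r: "0 < r" "ball x r \<subseteq> S"
    using assms(1,2) open_contains_ball by blast
  obtain d1 where d1: "0 < d1" "\<And>h. 0 < h \<Longrightarrow> h < d1 \<Longrightarrow> g' x < g' (x + h)"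
    using DERIV_pos_inc_right[OF g'' \<open>0 < D\<close>] by blast
  obtain d2 where d2: "0 < d2" "\<And>h. 0 < h \<Longrightarrow> h < d2 \<Longrightarrow> g' (x - h) < g' x"
    using DERIV_pos_inc_left[OF g'' \<open>0 < D\<close>] by blast
  define e where "e = min r (min d1 d2)"
  have deriv: "(g has_real_derivative g' t) (at t)" if "\<bar>t - x\<bar> < e" for t
    using that r(2) by (intro g') (auto simp: e_def dist_real_def subset_iff)
  have "g x < g y" if "y \<noteq> x" "\<bar>y - x\<bar> < e" for y
  proof (cases "x < y")
    case True
    show ?thesis
    proof (rule DERIV_pos_imp_less[OF True])
      show "(g has_real_derivative g' t) (at t)" if "x \<le> t" "t \<le> y" for t
        using that \<open>\<bar>y - x\<bar> < e\<close> by (intro deriv) auto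
      show "0 < g' t" if "x < t" "t < y" for t
        using d1(2)[of "t - x"] that \<open>\<bar>y - x\<bar> < e\<close> \<open>g' x = 0\<close> by (auto simp: e_def)
    qed
  next
    case False
    then have "y < x" using \<open>y \<noteq> x\<close> by simp
    show ?thesis
    proof (rule DERIV_neg_imp_greater[OF \<open>y < x\<close>])
      show "(g has_real_derivative g' t) (at t)" if "y \<le> t" "t \<le> x" for t
        using that \<open>\<bar>y - x\<bar> < e\<close> by (intro deriv) auto
      show "g' t < 0" if "y < t" "t < x" for t
        using d2(2)[of "x - t"] that \<open>\<bar>y - x\<bar> < e\<close> \<open>g' x = 0\<close> by (auto simp: e_def)
    qed
  qed
  moreover have "0 < e" using r d1 d2 by (simp add: e_def)
  ultimately show ?thesis by blast
qed

lemma loc_minimizers_eq_deriv2_pos: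
  fixes g g' g'' :: "real \<Rightarrow> real"
  assumes d1: "\<And>x. x \<in> {a..b} \<Longrightarrow> (g has_real_derivative g' x) (at x within {a..b})"
    and d2: "\<And>x. x \<in> {a..b} \<Longrightarrow> (g' has_real_derivative g'' x) (at x within {a..b})"
    and nondeg: "\<And>x. x \<in> {a<..<b} \<Longrightarrow> g' x = 0 \<Longrightarrow> g'' x \<noteq> 0"
  shows "loc_minimizers g a b = {x \<in> {a<..<b}. g' x = 0 \<and> 0 < g'' x}"
proof -
  have D1: "(g has_real_derivative g' x) (at x)" if "x \<in> {a<..<b}" for x
    using DERIV_at_if_within_Icc[OF that d1] that by auto
  have D2: "(g' has_real_derivative g'' x) (at x)" if "x \<in> {a<..<b}" for x
    using DERIV_at_if_within_Icc[OF that d2] that by auto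
  show ?thesis
  proof (intro set_eqI iffI)
    fix x assume "x \<in> loc_minimizers g a b"
    then obtain e where x: "x \<in> {a<..<b}" and "0 < e" and min: "\<forall>y. \<bar>y - x\<bar> < e \<longrightarrow> g x \<le> g y"
      unfolding loc_minimizers_def by blast
    have "g' x = 0"
      using DERIV_local_min[OF D1[OF x] \<open>0 < e\<close>] min by (simp add: abs_minus_commute)
    moreover have "0 < g'' x"
    proof (rule ccontr)
      assume "\<not> 0 < g'' x"
      with nondeg x \<open>g' x = 0\<close> have "0 < - g'' x" by force
      \<comment> \<open>then \<open>x\<close> would be a strict local maximum\<close>
      from strict_local_min_if_deriv2_pos[of "{a<..<b}" x "\<lambda>t. - g t" "\<lambda>t. - g' t", OF _ x _ _ _ this]
      obtain e' where "0 < e'" and max: "\<forall>y. y \<noteq> x \<and> \<bar>y - x\<bar> < e' \<longrightarrow> g y < g x"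
        using D1 D2 x \<open>g' x = 0\<close> by (auto intro: DERIV_minus)
      define y where "y = x + min e e' / 2"
      have "y \<noteq> x" "\<bar>y - x\<bar> < e" "\<bar>y - x\<bar> < e'"
        using \<open>0 < e\<close> \<open>0 < e'\<close> by (auto simp: y_def)
      then show False using min max by force
    qed
    ultimately show "x \<in> {x \<in> {a<..<b}. g' x = 0 \<and> 0 < g'' x}" using x by blast
  next
    fix x assume "x \<in> {x \<in> {a<..<b}. g' x = 0 \<and> 0 < g'' x}"
    then have x: "x \<in> {a<..<b}" "g' x = 0" "0 < g'' x" by auto
    from strict_local_min_if_deriv2_pos[OF open_greaterThanLessThan x(1) D1 D2[OF x(1)] x(2,3)]
    obtain e where "0 < e" "\<forall>y. y \<noteq> x \<and> \<bar>y - x\<bar> < e \<longrightarrow> g x < g y" by blast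
    then have "\<forall>y. \<bar>y - x\<bar> < e \<longrightarrow> g x \<le> g y" by (metis less_imp_le order_refl)
    with \<open>0 < e\<close> x(1) show "x \<in> loc_minimizers g a b" unfolding loc_minimizers_def by blast
  qed
qed

section \<open>Distance between clusterings with interval cells\<close>

lemma Min_permutation_sums_eq_diag:
  fixes T :: "nat \<Rightarrow> nat \<Rightarrow> real"
  assumes nonneg: "\<And>i j. i < s \<Longrightarrow> j < s \<Longrightarrow> 0 \<le> T i j"
    and off_diag: "\<And>i j. i < s \<Longrightarrow> j < s \<Longrightarrow> i \<noteq> j \<Longrightarrow> (\<Sum>k<s. T k k) \<le> T i j"
  shows "Min ((\<lambda>\<sigma>. \<Sum>i<s. T i (\<sigma> i)) ` {\<sigma>. \<sigma> permutes {..<s}}) = (\<Sum>i<s. T i i)"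
proof (rule Min_eqI)
  show "finite ((\<lambda>\<sigma>. \<Sum>i<s. T i (\<sigma> i)) ` {\<sigma>. \<sigma> permutes {..<s}})"
    by (simp add: finite_permutations)
  show "(\<Sum>i<s. T i i) \<in> (\<lambda>\<sigma>. \<Sum>i<s. T i (\<sigma> i)) ` {\<sigma>. \<sigma> permutes {..<s}}"
    by (rule image_eqI[of _ _ id]) (simp_all add: permutes_id)
next
  fix x assume "x \<in> (\<lambda>\<sigma>. \<Sum>i<s. T i (\<sigma> i)) ` {\<sigma>. \<sigma> permutes {..<s}}"
  then obtain \<sigma> where \<sigma>: "\<sigma> permutes {..<s}" and x: "x = (\<Sum>i<s. T i (\<sigma> i))" by blast
  show "(\<Sum>i<s. T i i) \<le> x"
  proof (cases "\<forall>i<s. \<sigma> i = i")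
    case True
    then have "x = (\<Sum>i<s. T i i)" unfolding x by (intro sum.cong) auto
    then show ?thesis by simp
  next
    case False
    then obtain i where i: "i < s" "\<sigma> i \<noteq> i" by blast
    have \<sigma>i: "\<sigma> i < s" using permutes_in_image[OF \<sigma>] i(1) by simp
    have "(\<Sum>k<s. T k k) \<le> T i (\<sigma> i)" using off_diag i \<sigma>i by metis
    also have "\<dots> \<le> x"
      unfolding x using i(1) nonneg permutes_in_image[OF \<sigma>]
      by (intro member_le_sum[where f = "\<lambda>i. T i (\<sigma> i)"]) auto
    finally show ?thesis .
  qed
qed

definition cell :: "real list \<Rightarrow> nat \<Rightarrow> real set" where
  "cell l i = {x. (i = 0 \<or> l ! (i - 1) < x) \<and> (i = length l \<or> x < l ! i)}"

definition cells :: "real list \<Rightarrow> real set list" where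
  "cells l = map (cell l) [0..<length l + 1]"

lemma modal_clustering_eq_cells:
  "modal_clustering g a b = cells (sorted_list_of_set (loc_minimizers g a b))"
  by (simp only: modal_clustering_def cells_def Let_def cell_def[abs_def])

lemma open_cell: "open (cell l i)"
proof -
  have "cell l i = (if i = 0 then UNIV else {l ! (i - 1)<..}) \<inter> (if i = length l then UNIV else {..<l ! i})"
    by (auto simp: cell_def)
  then show ?thesis by (auto intro!: open_Int)
qed

lemma disjoint_cells:
  assumes "sorted l" "i < j" "j \<le> length l"
  shows "cell l i \<inter> cell l j = {}"
proof -
  have "l ! i \<le> l ! (j - 1)" using assms by (intro sorted_nth_mono) auto
  then show ?thesis using assms by (auto simp: cell_def)
qed

lemma clust_dist_cells:
  assumes "length l1 = k" "length l2 = k"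
  shows "clust_dist P (cells l1) (cells l2) = 1/2 * Min ((\<lambda>\<sigma>. \<Sum>i<k+1.
    measure P (sym_diff (cell l1 i) (cell l2 (\<sigma> i)))) ` {\<sigma>. \<sigma> permutes {..<k+1}})"
proof -
  have cells: "length (cells l) = length l + 1" "i < length l + 1 \<Longrightarrow> cells l ! i = cell l i" for l i
    by (simp_all add: cells_def del: upt_Suc)
  have "\<sigma> i < s" if "\<sigma> permutes {..<s}" "i < s" for \<sigma> :: "nat \<Rightarrow> nat" and i s
    using permutes_in_image[OF that(1)] that(2) by simp
  then show ?thesis
    unfolding clust_dist_def Let_def cells(1) using assms
    by (intro arg_cong[where f = "\<lambda>X. 1/2 * Min X"] image_cong sum.cong) (auto simp: cells(2))
qed

locale atomless_prob_on_Ioo = prob_space P for P :: "real measure" +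
  fixes a b :: real
  assumes sets_P [simp]: "sets P = sets borel"
    and singleton_null: "\<And>x. {x} \<in> null_sets P"
    and outside_null: "- {a<..<b} \<in> null_sets P"
begin

definition cdf :: "real \<Rightarrow> real" where
  "cdf t = measure P {..t}"

lemma finite_null_sets: "finite A \<Longrightarrow> A \<in> null_sets P"
  using null_sets.finite_UN[of A "\<lambda>x. {x}" P] singleton_null by simp

lemma cdf_mono: "s \<le> t \<Longrightarrow> cdf s \<le> cdf t"
  unfolding cdf_def by (rule finite_measure_mono) auto

lemma measure_Ioo_eq_cdf_diff:
  assumes "s \<le> t"
  shows "measure P {s<..<t} = cdf t - cdf s"
proof -
  have "{s<..<t} = ({..t} - {..s}) - {t}" by auto
  then have "measure P {s<..<t} = measure P ({..t} - {..s})"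
    using measure_Diff_null_set[of "{..t} - {..s}" P "{t}"] singleton_null by simp
  also have "\<dots> = cdf t - cdf s"
    unfolding cdf_def using assms by (simp add: finite_measure_Diff)
  finally show ?thesis .
qed

lemma abs_cdf_diff: "\<bar>cdf u - cdf v\<bar> = cdf (max u v) - cdf (min u v)"
  using cdf_mono[of u v] cdf_mono[of v u] by (cases "u \<le> v") (auto simp: max_def min_def)

lemma measure_Int_Ioo:
  assumes "A \<in> sets borel"
  shows "measure P A = measure P (A \<inter> {a<..<b})"
proof -
  have "A - (- {a<..<b}) = A \<inter> {a<..<b}" by auto
  then show ?thesis
    using measure_Diff_null_set[of A P "- {a<..<b}"] outside_null assms by auto
qed

lemma measure_symdiff_Ioo:
  assumes "max u1 u2 < min v1 v2"
  shows "measure P (sym_diff {u1<..<v1} {u2<..<v2})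
         = \<bar>cdf u1 - cdf u2\<bar> + \<bar>cdf v1 - cdf v2\<bar>"
proof -
  let ?S = "sym_diff {u1<..<v1} {u2<..<v2}"
  have S: "?S - {u1, u2, v1, v2} = {min u1 u2<..<max u1 u2} \<union> {min v1 v2<..<max v1 v2}"
    using assms by (auto simp: min_def max_def)
  have "measure P ?S = measure P (?S - {u1, u2, v1, v2})"
    using measure_Diff_null_set[of ?S P "{u1, u2, v1, v2}"] finite_null_sets by auto
  also have "\<dots> = measure P {min u1 u2<..<max u1 u2} + measure P {min v1 v2<..<max v1 v2}"
    unfolding S using assms by (intro finite_measure_Union) auto
  also have "\<dots> = \<bar>cdf u1 - cdf u2\<bar> + \<bar>cdf v1 - cdf v2\<bar>"
    by (simp add: measure_Ioo_eq_cdf_diff abs_cdf_diff)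
  finally show ?thesis .
qed

definition lower :: "real list \<Rightarrow> nat \<Rightarrow> real" where
  "lower l i = (if i = 0 then a else l ! (i - 1))"

definition upper :: "real list \<Rightarrow> nat \<Rightarrow> real" where
  "upper l i = (if i = length l then b else l ! i)"

lemma lower_upper_bounds:
  assumes "set l \<subseteq> {a<..<b}" "i \<le> length l"
  shows "a \<le> lower l i" "upper l i \<le> b"
proof -
  have "l ! j \<in> {a<..<b}" if "j < length l" for j
    using assms(1) nth_mem[OF that] by blast
  then show "a \<le> lower l i" "upper l i \<le> b"
    using assms(2) by (auto simp: lower_def upper_def less_imp_le)
qed

lemma cell_Int_Ioo:
  assumes "i \<le> length l" "set l \<subseteq> {a<..<b}"
  shows "cell l i \<inter> {a<..<b} = {lower l i<..<upper l i}"
proof -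
  have "a \<le> lower l i" "upper l i \<le> b"
    using lower_upper_bounds[OF assms(2,1)] by simp_all
  then show ?thesis using assms(1) by (auto simp: cell_def lower_def upper_def split: if_splits)
qed

lemma measure_cell:
  assumes "i \<le> length l" "set l \<subseteq> {a<..<b}"
  shows "measure P (cell l i) = measure P {lower l i<..<upper l i}"
  using measure_Int_Ioo[of "cell l i"] cell_Int_Ioo[OF assms] open_cell by auto

lemma lower_less_upper:
  assumes "a < b" "sorted_wrt (<) l" "set l \<subseteq> {a<..<b}" "i \<le> length l"
  shows "lower l i < upper l i"
proof -
  have "l ! j \<in> {a<..<b}" if "j < length l" for j
    using assms(3) nth_mem[OF that] by blast
  then show ?thesis
    using assms sorted_wrt_nth_less[OF assms(2), of "i - 1" i] by (auto simp: lower_def upper_def)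
qed

lemma measure_symdiff_cell:
  assumes "i \<le> length l1" "i \<le> length l2" "set l1 \<subseteq> {a<..<b}" "set l2 \<subseteq> {a<..<b}"
    and "max (lower l1 i) (lower l2 i) < min (upper l1 i) (upper l2 i)"
  shows "measure P (sym_diff (cell l1 i) (cell l2 i)) =
    \<bar>cdf (lower l1 i) - cdf (lower l2 i)\<bar> + \<bar>cdf (upper l1 i) - cdf (upper l2 i)\<bar>"
proof -
  have "(sym_diff (cell l1 i) (cell l2 i)) \<inter> {a<..<b} =
    ((cell l1 i \<inter> {a<..<b}) - (cell l2 i \<inter> {a<..<b})) \<union> ((cell l2 i \<inter> {a<..<b}) - (cell l1 i \<inter> {a<..<b}))"
    by auto
  then show ?thesis
    using measure_Int_Ioo[of "sym_diff (cell l1 i) (cell l2 i)"] open_cell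
      measure_symdiff_Ioo[OF assms(5)] cell_Int_Ioo assms(1-4) by auto
qed

text \<open>Matching cell \<open>i\<close> with cell \<open>i\<close> costs \<open>2 D\<close> in total, where \<open>D\<close> is the boundary
  displacement below. A pair \<open>i \<noteq> j\<close> costs at least the mass of cell \<open>j\<close> of \<open>l2\<close> minus the
  cost of the pair \<open>(i, i)\<close>, hence at least \<open>4 D - 2 D\<close>, so no matching beats the identity.\<close>
lemma clust_dist_cells_eq_sum:
  assumes len: "length l1 = k" "length l2 = k" and "sorted l2"
    and sets: "set l1 \<subseteq> {a<..<b}" "set l2 \<subseteq> {a<..<b}"
    and interleave: "\<And>i. i \<le> k \<Longrightarrow> max (lower l1 i) (lower l2 i) < min (upper l1 i) (upper l2 i)"
    and mass: "\<And>i. i \<le> k \<Longrightarrow> 4 * (\<Sum>j<k. \<bar>cdf (l1 ! j) - cdf (l2 ! j)\<bar>) \<le> measure P (cell l2 i)"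
  shows "clust_dist P (cells l1) (cells l2) = (\<Sum>j<k. \<bar>cdf (l1 ! j) - cdf (l2 ! j)\<bar>)"
proof -
  define D where "D = (\<Sum>j<k. \<bar>cdf (l1 ! j) - cdf (l2 ! j)\<bar>)"
  define T where "T i j = measure P (sym_diff (cell l1 i) (cell l2 j))" for i j
  have "(\<Sum>i<k+1. T i i) = (\<Sum>i<k+1. \<bar>cdf (lower l1 i) - cdf (lower l2 i)\<bar>) +
      (\<Sum>i<k+1. \<bar>cdf (upper l1 i) - cdf (upper l2 i)\<bar>)"
    unfolding T_def using len sets interleave by (simp add: measure_symdiff_cell sum.distrib)
  also have "(\<Sum>i<k+1. \<bar>cdf (lower l1 i) - cdf (lower l2 i)\<bar>) = D"
    unfolding D_def by (simp only: Suc_eq_plus1[symmetric] sum.lessThan_Suc_shift) (simp add: lower_def)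
  also have "(\<Sum>i<k+1. \<bar>cdf (upper l1 i) - cdf (upper l2 i)\<bar>) = D"
    unfolding D_def using len by (simp add: upper_def)
  finally have diag: "(\<Sum>i<k+1. T i i) = 2 * D" by simp
  have off_diag: "(\<Sum>i<k+1. T i i) \<le> T i j" if "i < k + 1" "j < k + 1" "i \<noteq> j" for i j
  proof -
    have "cell l2 i \<inter> cell l2 j = {}"
      using disjoint_cells[OF \<open>sorted l2\<close>, of i j] disjoint_cells[OF \<open>sorted l2\<close>, of j i] that len
      by (cases "i < j") auto
    then have "cell l2 j \<subseteq> (sym_diff (cell l1 i) (cell l2 j)) \<union>
        (sym_diff (cell l1 i) (cell l2 i))"
      by auto
    then have "measure P (cell l2 j) \<le>
        measure P (sym_diff (cell l1 i) (cell l2 j) \<union> sym_diff (cell l1 i) (cell l2 i))"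
      using open_cell by (intro finite_measure_mono) auto
    also have "\<dots> \<le> T i j + T i i"
      unfolding T_def using open_cell by (intro measure_Un_le) auto
    finally have "measure P (cell l2 j) \<le> T i j + T i i" .
    moreover have "T i i \<le> (\<Sum>i<k+1. T i i)"
      using that by (intro member_le_sum) (auto simp: T_def)
    ultimately show ?thesis using mass[of j] that diag unfolding D_def by linarith
  qed
  have "clust_dist P (cells l1) (cells l2) = 1/2 * (\<Sum>i<k+1. T i i)"
    unfolding clust_dist_cells[OF len] T_def[symmetric]
    using Min_permutation_sums_eq_diag[of "k + 1" T] off_diag by (simp add: T_def)
  then show ?thesis using diag D_def by simp
qed

end

section \<open>Densities with nondegenerate critical points\<close>

lemma eventually_less_at_right_0: "0 < c \<Longrightarrow> eventually (\<lambda>x. x < c) (at_right (0::real))"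
  using eventually_at_right_real[of 0 c] by (rule eventually_mono) auto

lemma eventually_at_right_0_imp_ex: "eventually P (at_right (0::real)) \<Longrightarrow> \<exists>x>0. P x"
  using eventually_happens'[OF trivial_limit_at_right_real eventually_conj[OF eventually_at_right_less]]
  by blast

lemma le_SUP_if_continuous_on_Icc:
  fixes h :: "real \<Rightarrow> real"
  assumes "continuous_on {a..b} h" "y \<in> {a..b}"
  shows "h y \<le> (SUP x\<in>{a..b}. h x)"
  using assms by (intro cSUP_upper bounded_imp_bdd_above compact_imp_bounded
      compact_continuous_image compact_Icc)

locale nondegenerate_density =
  fixes f f1 f2 :: "real \<Rightarrow> real" and a b :: real
  assumes a_less_b: "a < b"
    and f_nonneg: "\<And>x. 0 \<le> f x"
    and P_prob: "prob_space (density lborel (\<lambda>x. ennreal (f x)))"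
    and f_zero: "\<And>x. x \<notin> {a..b} \<Longrightarrow> f x = 0"
    and f_d1: "\<And>x. x \<in> {a..b} \<Longrightarrow> (f has_real_derivative f1 x) (at x within {a..b})"
    and f_d2: "\<And>x. x \<in> {a..b} \<Longrightarrow> (f1 has_real_derivative f2 x) (at x within {a..b})"
    and f2_continuous: "continuous_on {a..b} f2"
    and f1_a: "f1 a \<noteq> 0" and f1_b: "f1 b \<noteq> 0"
    and finite_critical: "finite {x \<in> {a<..<b}. f1 x = 0}"
    and crit_nondeg: "\<And>x. x \<in> {a<..<b} \<Longrightarrow> f1 x = 0 \<Longrightarrow> f2 x \<noteq> 0"
begin

abbreviation P :: "real measure" where
  "P \<equiv> density lborel (\<lambda>x. ennreal (f x))"

lemma f_continuous: "continuous_on {a..b} f"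
  using continuous_on_if_DERIV_within f_d1 by blast

lemma f1_continuous: "continuous_on {a..b} f1"
  using continuous_on_if_DERIV_within f_d2 by blast

lemma f_borel_measurable [measurable]: "f \<in> borel_measurable borel"
proof -
  have "(\<lambda>x. indicator {a..b} x *\<^sub>R f x) \<in> borel_measurable borel"
    by (intro borel_measurable_continuous_on_indicator f_continuous) simp
  also have "(\<lambda>x. indicator {a..b} x *\<^sub>R f x) = f"
    using f_zero by (auto simp: indicator_def fun_eq_iff)
  finally show ?thesis .
qed

lemma null_sets_P_if_lborel: "A \<in> null_sets lborel \<Longrightarrow> A \<in> null_sets P"
  by (subst null_sets_density_iff) (auto dest: AE_not_in elim: AE_mp)

sublocale atomless_prob_on_Ioo P a b
proof -
  interpret prob_space P by (rule P_prob)
  show "atomless_prob_on_Ioo P a b"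
  proof
    show "{x} \<in> null_sets P" for x
      by (intro null_sets_P_if_lborel finite_imp_null_set_lborel) simp
    have "AE x in lborel. x \<notin> {a, b}"
      by (rule AE_not_in[OF finite_imp_null_set_lborel]) simp
    moreover have "f x = 0" if "x \<notin> {a<..<b}" "x \<noteq> a" "x \<noteq> b" for x
      using that f_zero[of x] by force
    ultimately have "AE x in lborel. x \<in> - {a<..<b} \<longrightarrow> ennreal (f x) = 0"
      by (auto elim: AE_mp)
    then show "- {a<..<b} \<in> null_sets P"
      by (subst null_sets_density_iff) auto
  qed simp
qed

lemma emeasure_P_le:
  assumes "\<And>x. f x \<le> B" "A \<in> sets borel"
  shows "emeasure P A \<le> ennreal B * emeasure lborel A"
proof -
  have "emeasure P A = (\<integral>\<^sup>+x. ennreal (f x) * indicator A x \<partial>lborel)"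
    using assms by (intro emeasure_density) auto
  also have "\<dots> \<le> (\<integral>\<^sup>+x. ennreal B * indicator A x \<partial>lborel)"
    using assms by (intro nn_integral_mono) (auto simp: indicator_def intro: ennreal_leI)
  also have "\<dots> = ennreal B * emeasure lborel A"
    using assms by (intro nn_integral_cmult_indicator) auto
  finally show ?thesis .
qed

lemma emeasure_P_ge:
  assumes "\<And>x. x \<in> A \<Longrightarrow> c \<le> f x" "A \<in> sets borel" "0 \<le> c"
  shows "ennreal c * emeasure lborel A \<le> emeasure P A"
proof -
  have "ennreal c * emeasure lborel A = (\<integral>\<^sup>+x. ennreal c * indicator A x \<partial>lborel)"
    using assms by (intro nn_integral_cmult_indicator[symmetric]) auto
  also have "\<dots> \<le> (\<integral>\<^sup>+x. ennreal (f x) * indicator A x \<partial>lborel)"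
    using assms by (intro nn_integral_mono) (auto simp: indicator_def intro: ennreal_leI)
  also have "\<dots> = emeasure P A"
    using assms by (intro emeasure_density[symmetric]) auto
  finally show ?thesis .
qed

lemma cdf_lipschitz: "\<exists>B>0. \<forall>s t. \<bar>cdf t - cdf s\<bar> \<le> B * \<bar>t - s\<bar>"
proof -
  obtain x0 where x0: "\<forall>y\<in>{a..b}. f y \<le> f x0"
    using continuous_attains_sup[OF compact_Icc _ f_continuous] a_less_b by auto
  define B where "B = max (f x0) 1"
  have f_le: "f x \<le> B" for x
    using x0 f_zero[of x] by (cases "x \<in> {a..b}") (auto simp: B_def le_max_iff_disj)
  have "cdf t - cdf s \<le> B * (t - s)" if "s \<le> t" for s t
  proof -
    have "ennreal (measure P {s<..<t}) \<le> ennreal B * ennreal (t - s)"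
      using emeasure_P_le[OF f_le, of "{s<..<t}"] that by (simp add: emeasure_eq_measure)
    then have "measure P {s<..<t} \<le> B * (t - s)"
      using that by (simp add: B_def ennreal_mult'[symmetric] ennreal_le_iff)
    then show ?thesis using measure_Ioo_eq_cdf_diff[OF that] by simp
  qed
  moreover have "0 < B" by (simp add: B_def)
  ultimately have "\<bar>cdf t - cdf s\<bar> \<le> B * \<bar>t - s\<bar>" for s t
    using cdf_mono[of s t] cdf_mono[of t s] by (cases "s \<le> t") (auto simp: abs_if)
  with \<open>0 < B\<close> show ?thesis by blast
qed

text \<open>On an interval where \<open>f\<close> vanishes every point would be critical, but there are only finitely many.\<close>
lemma f_pos_somewhere:
  assumes "u < v" "a \<le> u" "v \<le> b"
  shows "\<exists>p\<in>{u<..<v}. 0 < f p"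
proof (rule ccontr)
  assume "\<not> ?thesis"
  then have zero: "f p = 0" if "p \<in> {u<..<v}" for p
    using that f_nonneg[of p] by force
  have "f1 p = 0" if p: "p \<in> {u<..<v}" for p
  proof -
    have "(f has_real_derivative f1 p) (at p)"
      using DERIV_at_if_within_Icc[OF _ f_d1] p assms by auto
    then have "((\<lambda>_. 0) has_real_derivative f1 p) (at p)"
      by (rule has_field_derivative_transform_within_open[where S = "{u<..<v}"]) (use p zero in auto)
    then show ?thesis using DERIV_const DERIV_unique by blast
  qed
  then have "{u<..<v} \<subseteq> {x \<in> {a<..<b}. f1 x = 0}" using assms by auto
  then show False using finite_critical finite_subset infinite_Ioo[OF \<open>u < v\<close>] by blast
qed

lemma measure_Ioo_pos:
  assumes "u < v" "a \<le> u" "v \<le> b"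
  shows "0 < measure P {u<..<v}"
proof -
  obtain p where p: "p \<in> {u<..<v}" "0 < f p" using f_pos_somewhere[OF assms] by blast
  have "isCont f p"
    using continuous_on_interior[OF f_continuous, of p] p assms by (simp add: interior_atLeastAtMost_real)
  then obtain r where r: "0 < r" "\<And>y. dist y p < r \<Longrightarrow> dist (f y) (f p) < f p / 2"
    using p(2) unfolding continuous_at_eps_delta by (metis half_gt_zero)
  define r' where "r' = min r (min (p - u) (v - p))"
  have r': "0 < r'" "{p - r'<..<p + r'} \<subseteq> {u<..<v}" using r p by (auto simp: r'_def)
  have "f p / 2 \<le> f y" if "y \<in> {p - r'<..<p + r'}" for y
  proof -
    have "dist y p < r" using that by (auto simp: r'_def dist_real_def)
    then have "\<bar>f y - f p\<bar> < f p / 2" using r(2)[of y] by (simp add: dist_real_def)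
    then show ?thesis by arith
  qed
  then have "ennreal (f p / 2) * emeasure lborel {p - r'<..<p + r'} \<le> emeasure P {p - r'<..<p + r'}"
    using p(2) by (intro emeasure_P_ge) auto
  also have "\<dots> \<le> emeasure P {u<..<v}" using r'(2) by (intro emeasure_mono) auto
  finally have "ennreal (f p / 2) * ennreal (2 * r') \<le> ennreal (measure P {u<..<v})"
    using r'(1) by (simp add: emeasure_eq_measure)
  also have "ennreal (f p / 2) * ennreal (2 * r') = ennreal (f p / 2 * (2 * r'))"
    using p(2) r'(1) by (intro ennreal_mult[symmetric]) auto
  finally have "ennreal (f p / 2 * (2 * r')) \<le> ennreal (measure P {u<..<v})" .
  then have "f p / 2 * (2 * r') \<le> measure P {u<..<v}" by (simp add: ennreal_le_iff)
  moreover have "0 < f p / 2 * (2 * r')" using p(2) r'(1) by simp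
  ultimately show ?thesis by linarith
qed

definition crit :: "real set" where
  "crit = {x \<in> {a<..<b}. f1 x = 0}"

lemma crit_subset_Ioo: "crit \<subseteq> {a<..<b}"
  by (auto simp: crit_def)

lemma loc_minimizers_f: "loc_minimizers f a b = {z \<in> crit. 0 < f2 z}"
proof -
  have "loc_minimizers f a b = {x \<in> {a<..<b}. f1 x = 0 \<and> 0 < f2 x}"
    by (rule loc_minimizers_eq_deriv2_pos) (fact f_d1 f_d2 crit_nondeg)+
  then show ?thesis by (simp add: crit_def conj_assoc)
qed

definition min_list :: "real list" where
  "min_list = sorted_list_of_set (loc_minimizers f a b)"

lemma finite_crit: "finite crit"
  using finite_critical by (simp add: crit_def)

lemma finite_loc_minimizers_f: "finite (loc_minimizers f a b)"
  using finite_crit by (simp add: loc_minimizers_f)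

lemma set_min_list: "set min_list = loc_minimizers f a b"
  using finite_loc_minimizers_f by (simp add: min_list_def)

lemma sorted_min_list: "sorted_wrt (<) min_list"
  unfolding min_list_def by (rule strict_sorted_list_of_set)

lemma min_list_nth_in_crit: "j < length min_list \<Longrightarrow> min_list ! j \<in> crit"
  using nth_mem[of j min_list] set_min_list loc_minimizers_f by auto

lemma set_min_list_subset_Ioo: "set min_list \<subseteq> {a<..<b}"
  using set_min_list loc_minimizers_f crit_subset_Ioo by auto

lemma measure_cell_min_list_pos:
  assumes "i \<le> length min_list"
  shows "0 < measure P (cell min_list i)"
  using measure_cell[OF assms set_min_list_subset_Ioo] measure_Ioo_pos
    lower_less_upper[OF a_less_b sorted_min_list set_min_list_subset_Ioo assms]
    lower_upper_bounds[OF set_min_list_subset_Ioo assms] by simp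

definition admissible_radius :: "real \<Rightarrow> bool" where
  "admissible_radius \<delta> \<longleftrightarrow> 0 < \<delta> \<and> (\<forall>z\<in>crit. a < z - \<delta> \<and> z + \<delta> < b) \<and>
     (\<forall>z\<in>crit. \<forall>z'\<in>crit. z \<noteq> z' \<longrightarrow> 2 * \<delta> < \<bar>z - z'\<bar>) \<and>
     (\<forall>z\<in>crit. \<forall>y. \<bar>y - z\<bar> \<le> \<delta> \<longrightarrow> \<bar>f2 y - f2 z\<bar> < \<bar>f2 z\<bar> / 2)"

lemma admissible_radiusD:
  assumes "admissible_radius \<delta>"
  shows "0 < \<delta>" and "z \<in> crit \<Longrightarrow> a < z - \<delta> \<and> z + \<delta> < b"
    and "z \<in> crit \<Longrightarrow> z' \<in> crit \<Longrightarrow> z \<noteq> z' \<Longrightarrow> 2 * \<delta> < \<bar>z - z'\<bar>"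
    and "z \<in> crit \<Longrightarrow> \<bar>y - z\<bar> \<le> \<delta> \<Longrightarrow> \<bar>f2 y - f2 z\<bar> < \<bar>f2 z\<bar> / 2"
  using assms unfolding admissible_radius_def by auto

lemma eventually_admissible_radius: "eventually admissible_radius (at_right 0)"
proof -
  have inside: "eventually (\<lambda>\<delta>. \<forall>z\<in>crit. a < z - \<delta> \<and> z + \<delta> < b) (at_right 0)"
  proof (rule eventually_ball_finite[OF finite_crit], intro ballI)
    fix z assume "z \<in> crit"
    then have "0 < z - a" "0 < b - z" by (auto simp: crit_def)
    from eventually_conj[OF eventually_less_at_right_0[OF this(1)] eventually_less_at_right_0[OF this(2)]]
    show "eventually (\<lambda>\<delta>. a < z - \<delta> \<and> z + \<delta> < b) (at_right 0)"
      by eventually_elim auto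
  qed
  have separated: "eventually (\<lambda>\<delta>. \<forall>z\<in>crit. \<forall>z'\<in>crit. z \<noteq> z' \<longrightarrow> 2 * \<delta> < \<bar>z - z'\<bar>) (at_right 0)"
  proof (intro eventually_ball_finite[OF finite_crit] ballI)
    fix z z' assume "z \<in> crit" "z' \<in> crit"
    show "eventually (\<lambda>\<delta>. z \<noteq> z' \<longrightarrow> 2 * \<delta> < \<bar>z - z'\<bar>) (at_right 0)"
    proof (cases "z = z'")
      case False
      then have "0 < \<bar>z - z'\<bar> / 2" by simp
      from eventually_less_at_right_0[OF this] show ?thesis by eventually_elim auto
    qed simp
  qed
  have sign: "eventually (\<lambda>\<delta>. \<forall>z\<in>crit. \<forall>y. \<bar>y - z\<bar> \<le> \<delta> \<longrightarrow> \<bar>f2 y - f2 z\<bar> < \<bar>f2 z\<bar> / 2) (at_right 0)"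
  proof (rule eventually_ball_finite[OF finite_crit], intro ballI)
    fix z assume "z \<in> crit"
    then have z: "z \<in> {a<..<b}" and pos: "0 < \<bar>f2 z\<bar> / 2" using crit_nondeg by (auto simp: crit_def)
    have "isCont f2 z"
      using continuous_on_interior[OF f2_continuous, of z] z by (simp add: interior_atLeastAtMost_real)
    from this[unfolded continuous_at_eps_delta, rule_format, OF pos]
    obtain d where "0 < d" and d: "\<And>y. dist y z < d \<Longrightarrow> dist (f2 y) (f2 z) < \<bar>f2 z\<bar> / 2"
      by blast
    from eventually_less_at_right_0[OF \<open>0 < d\<close>]
    show "eventually (\<lambda>\<delta>. \<forall>y. \<bar>y - z\<bar> \<le> \<delta> \<longrightarrow> \<bar>f2 y - f2 z\<bar> < \<bar>f2 z\<bar> / 2) (at_right 0)"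
      by eventually_elim (use d in \<open>auto simp: dist_real_def\<close>)
  qed
  show ?thesis
    using eventually_conj[OF eventually_at_right_less eventually_conj[OF inside eventually_conj[OF separated sign]]]
    by (rule eventually_mono) (simp add: admissible_radius_def)
qed

lemma f1_bounded_away_from_crit:
  assumes "0 < \<delta>"
  shows "\<exists>\<eta>>0. \<forall>y\<in>{a..b}. (\<forall>z\<in>crit. \<delta> \<le> \<bar>y - z\<bar>) \<longrightarrow> \<eta> \<le> \<bar>f1 y\<bar>"
proof -
  define S where "S = {a..b} \<inter> (\<Inter>z\<in>crit. {y. \<delta> \<le> \<bar>y - z\<bar>})"
  have "compact S"
    unfolding S_def by (intro compact_Int_closed compact_Icc closed_INT closed_Collect_le ballI
        continuous_intros)
  show ?thesis
  proof (cases "S = {}")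
    case True
    then show ?thesis by (intro exI[of _ 1]) (auto simp: S_def)
  next
    case False
    have "continuous_on S (\<lambda>y. \<bar>f1 y\<bar>)"
      by (rule continuous_on_subset[of "{a..b}"]) (auto simp: S_def intro!: continuous_intros f1_continuous)
    from continuous_attains_inf[OF \<open>compact S\<close> False this]
    obtain y0 where y0: "y0 \<in> S" "\<And>y. y \<in> S \<Longrightarrow> \<bar>f1 y0\<bar> \<le> \<bar>f1 y\<bar>" by blast
    have "f1 y0 \<noteq> 0"
    proof
      assume "f1 y0 = 0"
      then have "y0 \<noteq> a" "y0 \<noteq> b" using f1_a f1_b by auto
      with y0(1) \<open>f1 y0 = 0\<close> have "y0 \<in> crit" by (auto simp: S_def crit_def)
      with y0(1) assms show False by (auto simp: S_def)
    qed
    then show ?thesis using y0 by (intro exI[of _ "\<bar>f1 y0\<bar>"]) (auto simp: S_def)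
  qed
qed

lemma f2_bounded_away_on_crit: "\<exists>c>0. \<forall>z\<in>crit. c \<le> \<bar>f2 z\<bar> / 2"
proof -
  have "eventually (\<lambda>c. \<forall>z\<in>crit. c < \<bar>f2 z\<bar> / 2) (at_right 0)"
  proof (rule eventually_ball_finite[OF finite_crit], intro ballI)
    fix z assume "z \<in> crit"
    then have "0 < \<bar>f2 z\<bar> / 2" using crit_nondeg by (auto simp: crit_def)
    then show "eventually (\<lambda>c. c < \<bar>f2 z\<bar> / 2) (at_right 0)" by (rule eventually_less_at_right_0)
  qed
  then show ?thesis by (auto dest!: eventually_at_right_0_imp_ex intro: less_imp_le)
qed

lemma cell_bounds_interleave:
  assumes "admissible_radius \<delta>" and len: "length l = length min_list"
    and close: "\<And>j. j < length l \<Longrightarrow> \<bar>l ! j - min_list ! j\<bar> < \<delta>" and "i \<le> length l"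
  shows "max (lower l i) (lower min_list i) < min (upper l i) (upper min_list i)"
proof -
  let ?m = min_list and ?k = "length min_list"
  have "0 < \<delta>" and inside: "\<And>z. z \<in> crit \<Longrightarrow> a < z - \<delta> \<and> z + \<delta> < b"
    and sep: "\<And>z z'. z \<in> crit \<Longrightarrow> z' \<in> crit \<Longrightarrow> z \<noteq> z' \<Longrightarrow> 2 * \<delta> < \<bar>z - z'\<bar>"
    using admissible_radiusD[OF assms(1)] by auto
  define lo where "lo = (if i = 0 then a else ?m ! (i - 1) + \<delta>)"
  define up where "up = (if i = ?k then b else ?m ! i - \<delta>)"
  have "lower l i \<le> lo \<and> lower ?m i \<le> lo"
  proof (cases "i = 0")
    case False
    then have "i - 1 < length l" using \<open>i \<le> length l\<close> by simp
    then show ?thesis using close[of "i - 1"] \<open>0 < \<delta>\<close> False by (auto simp: lo_def lower_def abs_less_iff)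
  qed (simp add: lo_def lower_def)
  moreover have "up \<le> upper l i \<and> up \<le> upper ?m i"
  proof (cases "i = ?k")
    case False
    then have "i < length l" using \<open>i \<le> length l\<close> len by simp
    then show ?thesis using close[of i] \<open>0 < \<delta>\<close> False len by (auto simp: up_def upper_def abs_less_iff)
  qed (use len in \<open>simp add: up_def upper_def\<close>)
  moreover have "lo < up"
  proof -
    have "?m ! (i - 1) < ?m ! i" if "0 < i" "i < ?k"
      using sorted_wrt_nth_less[OF sorted_min_list, of "i - 1" i] that by simp
    then have "?m ! (i - 1) + 2 * \<delta> < ?m ! i" if "0 < i" "i < ?k"
      using sep[OF min_list_nth_in_crit min_list_nth_in_crit, of "i - 1" i] that by fastforce
    then show ?thesis
      using inside[OF min_list_nth_in_crit, of 0] inside[OF min_list_nth_in_crit, of "i - 1"]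
        inside[OF min_list_nth_in_crit, of i] \<open>0 < \<delta>\<close> a_less_b \<open>i \<le> length l\<close> len
      by (auto simp: lo_def up_def)
  qed
  ultimately show ?thesis by linarith
qed

end

section \<open>Perturbed densities\<close>

lemma sorted_list_of_set_image_strict_mono:
  fixes \<phi> :: "'a::linorder \<Rightarrow> 'b::linorder"
  assumes "finite A" "strict_mono_on A \<phi>"
  shows "sorted_list_of_set (\<phi> ` A) = map \<phi> (sorted_list_of_set A)"
proof -
  have "sorted_wrt (<) (sorted_list_of_set A)" by (rule strict_sorted_list_of_set)
  then have "sorted_wrt (<) (map \<phi> (sorted_list_of_set A))"
    unfolding sorted_wrt_map using assms
    by (elim sorted_wrt_mono_rel[rotated]) (auto dest: strict_mono_onD)
  moreover have "length (map \<phi> (sorted_list_of_set A)) = card (\<phi> ` A)"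
    using assms by (simp add: card_image strict_mono_on_imp_inj_on)
  ultimately show ?thesis
    using assms(1) sorted_list_of_set_unique[of "\<phi> ` A" "map \<phi> (sorted_list_of_set A)"] by simp
qed

locale perturbed_density = nondegenerate_density +
  fixes g g1 g2 :: "real \<Rightarrow> real" and \<delta> \<eta> c :: real
  assumes admissible: "admissible_radius \<delta>"
    and f1_away: "\<And>y. y \<in> {a..b} \<Longrightarrow> \<forall>z\<in>crit. \<delta> \<le> \<bar>y - z\<bar> \<Longrightarrow> \<eta> \<le> \<bar>f1 y\<bar>"
    and f2_away: "\<And>z. z \<in> crit \<Longrightarrow> c \<le> \<bar>f2 z\<bar> / 2"
    and g_d1: "\<And>x. x \<in> {a..b} \<Longrightarrow> (g has_real_derivative g1 x) (at x within {a..b})"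
    and g_d2: "\<And>x. x \<in> {a..b} \<Longrightarrow> (g1 has_real_derivative g2 x) (at x within {a..b})"
    and g1_close: "\<And>y. y \<in> {a..b} \<Longrightarrow> \<bar>g1 y - f1 y\<bar> < \<eta>"
    and g2_close: "\<And>y. y \<in> {a..b} \<Longrightarrow> \<bar>g2 y - f2 y\<bar> < c"
begin

lemmas radius_pos = admissible_radiusD(1)[OF admissible]
  and crit_ball_inside = admissible_radiusD(2)[OF admissible]
  and crit_separated = admissible_radiusD(3)[OF admissible]
  and f2_near_crit = admissible_radiusD(4)[OF admissible]

lemma crit_ball_subset: "z \<in> crit \<Longrightarrow> \<bar>y - z\<bar> \<le> \<delta> \<Longrightarrow> y \<in> {a<..<b}"
  using crit_ball_inside[of z] by (auto simp: abs_le_iff)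

lemma g2_near_crit:
  assumes "z \<in> crit" "\<bar>y - z\<bar> \<le> \<delta>"
  shows "\<bar>g2 y - f2 z\<bar> < \<bar>f2 z\<bar>"
proof -
  have "\<bar>g2 y - f2 y\<bar> < c" using g2_close crit_ball_subset[OF assms] by auto
  then show ?thesis using f2_away[OF assms(1)] f2_near_crit[OF assms] by arith
qed

lemma g1_zero_near_crit:
  assumes "y \<in> {a..b}" "g1 y = 0"
  shows "\<exists>z\<in>crit. \<bar>y - z\<bar> < \<delta>"
proof (rule ccontr)
  assume "\<not> ?thesis"
  then have "\<eta> \<le> \<bar>f1 y\<bar>" using f1_away[OF assms(1)] by force
  with g1_close[OF assms(1)] assms(2) show False by simp
qed

lemma loc_minimizers_g: "loc_minimizers g a b = {y \<in> {a<..<b}. g1 y = 0 \<and> 0 < g2 y}"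
proof (rule loc_minimizers_eq_deriv2_pos[OF g_d1 g_d2])
  fix y assume "y \<in> {a<..<b}" "g1 y = 0"
  then obtain z where "z \<in> crit" "\<bar>y - z\<bar> < \<delta>"
    using g1_zero_near_crit[of y] by auto
  then show "g2 y \<noteq> 0" using g2_near_crit[of z y] by auto
qed

lemma DERIV_near_crit:
  assumes "z \<in> crit" "\<bar>t - z\<bar> \<le> \<delta>"
  shows "(f1 has_real_derivative f2 t) (at t)" "(g1 has_real_derivative g2 t) (at t)"
  using DERIV_at_if_within_Icc[OF crit_ball_subset[OF assms] f_d2]
    DERIV_at_if_within_Icc[OF crit_ball_subset[OF assms] g_d2] crit_ball_subset[OF assms]
  by auto

lemma g1_strict_mono_near_min:
  assumes "z \<in> loc_minimizers f a b" "z - \<delta> \<le> w" "w < w'" "w' \<le> z + \<delta>"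
  shows "g1 w < g1 w'"
proof (rule DERIV_pos_imp_less[OF \<open>w < w'\<close>])
  have z: "z \<in> crit" "0 < f2 z" using assms(1) loc_minimizers_f by auto
  fix t
  show "(g1 has_real_derivative g2 t) (at t)" if "w \<le> t" "t \<le> w'"
    using that assms by (intro DERIV_near_crit(2)[OF z(1)]) (simp add: abs_le_iff)
  assume "w < t" "t < w'"
  with assms have "\<bar>g2 t - f2 z\<bar> < \<bar>f2 z\<bar>" by (intro g2_near_crit[OF z(1)]) (simp add: abs_le_iff)
  with z(2) show "0 < g2 t" by arith
qed

lemma g1_zero_near_min_unique:
  assumes "z \<in> loc_minimizers f a b" "\<bar>w - z\<bar> < \<delta>" "\<bar>w' - z\<bar> < \<delta>" "g1 w = 0" "g1 w' = 0"
  shows "w = w'"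
proof (rule ccontr)
  assume "w \<noteq> w'"
  then have "g1 (min w w') < g1 (max w w')"
    using assms(2,3) by (intro g1_strict_mono_near_min[OF assms(1)]) (auto simp: abs_less_iff)
  with assms(4,5) show False by (simp add: min_def max_def split: if_splits)
qed

text \<open>\<open>f1\<close> increases through \<open>0\<close> on the ball around a minimizer and is at least \<open>\<eta>\<close> away
  from \<open>0\<close> at its two ends, so \<open>g1\<close> changes sign on the ball as well.\<close>
lemma g1_zero_near_min_exists:
  assumes "z \<in> loc_minimizers f a b"
  shows "\<exists>w. \<bar>w - z\<bar> < \<delta> \<and> g1 w = 0"
proof -
  have z: "z \<in> crit" "0 < f2 z" using assms loc_minimizers_f by auto
  then have "f1 z = 0" by (simp add: crit_def)
  have f1_increasing: "f1 u < f1 v" if "z - \<delta> \<le> u" "u < v" "v \<le> z + \<delta>" for u v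
  proof (rule DERIV_pos_imp_less[OF \<open>u < v\<close>])
    fix t
    show "(f1 has_real_derivative f2 t) (at t)" if "u \<le> t" "t \<le> v"
      using that \<open>z - \<delta> \<le> u\<close> \<open>v \<le> z + \<delta>\<close> by (intro DERIV_near_crit(1)[OF z(1)]) (simp add: abs_le_iff)
    assume "u < t" "t < v"
    with \<open>z - \<delta> \<le> u\<close> \<open>v \<le> z + \<delta>\<close> have "\<bar>f2 t - f2 z\<bar> < \<bar>f2 z\<bar> / 2"
      by (intro f2_near_crit[OF z(1)]) (simp add: abs_le_iff)
    with z(2) show "0 < f2 t" by arith
  qed
  have far: "\<delta> \<le> \<bar>y - z'\<bar>" if "\<bar>y - z\<bar> = \<delta>" "z' \<in> crit" for y z'
  proof (cases "z' = z")
    case False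
    then have "2 * \<delta> < \<bar>z - z'\<bar>" using crit_separated[OF z(1) that(2)] by simp
    then show ?thesis using that(1) by arith
  qed (use that in simp)
  have ends: "z - \<delta> \<in> {a..b}" "z + \<delta> \<in> {a..b}" using crit_ball_inside[OF z(1)] radius_pos by auto
  have "\<eta> \<le> \<bar>f1 (z - \<delta>)\<bar>" "\<eta> \<le> \<bar>f1 (z + \<delta>)\<bar>"
    using f1_away[OF ends(1)] f1_away[OF ends(2)] far[of "z - \<delta>"] far[of "z + \<delta>"] radius_pos by auto
  moreover have "\<bar>g1 (z - \<delta>) - f1 (z - \<delta>)\<bar> < \<eta>" "\<bar>g1 (z + \<delta>) - f1 (z + \<delta>)\<bar> < \<eta>"
    using g1_close ends by auto
  moreover have "f1 (z - \<delta>) < f1 z" "f1 z < f1 (z + \<delta>)"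
    using f1_increasing radius_pos by auto
  ultimately have neg: "g1 (z - \<delta>) < 0" and pos: "0 < g1 (z + \<delta>)"
    using \<open>f1 z = 0\<close> by arith+
  have "\<forall>t. z - \<delta> \<le> t \<and> t \<le> z + \<delta> \<longrightarrow> isCont g1 t"
    by (auto intro!: DERIV_isCont DERIV_near_crit(2)[OF z(1)] simp: abs_le_iff)
  then obtain w where "z - \<delta> \<le> w" "w \<le> z + \<delta>" "g1 w = 0"
    using IVT[of g1 "z - \<delta>" 0 "z + \<delta>"] neg pos radius_pos by auto
  moreover have "w \<noteq> z - \<delta>" "w \<noteq> z + \<delta>" using neg pos \<open>g1 w = 0\<close> by auto
  ultimately show ?thesis by (intro exI[of _ w]) (auto simp: abs_less_iff)
qed

lemma loc_minimizers_g_image: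
  "\<exists>\<phi>. loc_minimizers g a b = \<phi> ` loc_minimizers f a b \<and> strict_mono_on (loc_minimizers f a b) \<phi>
     \<and> (\<forall>z\<in>loc_minimizers f a b. \<bar>\<phi> z - z\<bar> < \<delta>)"
proof -
  define \<phi> where "\<phi> z = (SOME w. \<bar>w - z\<bar> < \<delta> \<and> g1 w = 0)" for z
  have \<phi>: "\<bar>\<phi> z - z\<bar> < \<delta>" "g1 (\<phi> z) = 0" if "z \<in> loc_minimizers f a b" for z
    using someI_ex[OF g1_zero_near_min_exists[OF that]] unfolding \<phi>_def by auto
  have min_iff: "z \<in> loc_minimizers f a b \<longleftrightarrow> z \<in> crit \<and> 0 < f2 z" for z
    using loc_minimizers_f by auto
  have "loc_minimizers g a b \<subseteq> \<phi> ` loc_minimizers f a b"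
  proof
    fix y assume "y \<in> loc_minimizers g a b"
    then have y: "y \<in> {a<..<b}" "g1 y = 0" "0 < g2 y" using loc_minimizers_g by auto
    then obtain z where z: "z \<in> crit" "\<bar>y - z\<bar> < \<delta>" using g1_zero_near_crit[of y] by auto
    have "\<bar>g2 y - f2 z\<bar> < \<bar>f2 z\<bar>" using g2_near_crit[OF z(1)] z(2) by simp
    with y(3) z(1) have zmin: "z \<in> loc_minimizers f a b" unfolding min_iff by arith
    have "y = \<phi> z" using g1_zero_near_min_unique[OF zmin z(2) \<phi>(1)[OF zmin] y(2) \<phi>(2)[OF zmin]] .
    with zmin show "y \<in> \<phi> ` loc_minimizers f a b" by blast
  qed
  moreover have "\<phi> ` loc_minimizers f a b \<subseteq> loc_minimizers g a b"
  proof
    fix y assume "y \<in> \<phi> ` loc_minimizers f a b"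
    then obtain z where z: "z \<in> crit" "0 < f2 z" and y: "\<bar>y - z\<bar> < \<delta>" "g1 y = 0"
      using \<phi> min_iff by blast
    have "\<bar>g2 y - f2 z\<bar> < \<bar>f2 z\<bar>" using g2_near_crit[OF z(1)] y(1) by simp
    with z(2) have "0 < g2 y" by arith
    moreover have "y \<in> {a<..<b}" using crit_ball_subset[OF z(1)] y(1) by simp
    ultimately show "y \<in> loc_minimizers g a b" using loc_minimizers_g y(2) by simp
  qed
  moreover have "strict_mono_on (loc_minimizers f a b) \<phi>"
  proof (rule strict_mono_onI)
    fix z z' assume z: "z \<in> loc_minimizers f a b" "z' \<in> loc_minimizers f a b" "z < z'"
    then have "2 * \<delta> < \<bar>z - z'\<bar>" using crit_separated[of z z'] min_iff by simp
    with z \<phi>(1)[OF z(1)] \<phi>(1)[OF z(2)] show "\<phi> z < \<phi> z'" by arith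
  qed
  ultimately show ?thesis using \<phi>(1) by blast
qed

lemma clust_dist_perturbed:
  fixes B :: real
  assumes "0 \<le> B" and lip: "\<And>s t. \<bar>cdf t - cdf s\<bar> \<le> B * \<bar>t - s\<bar>"
    and mass: "\<And>i. i \<le> length min_list \<Longrightarrow> 4 * (length min_list * B * \<delta>) \<le> measure P (cell min_list i)"
  shows "finite (loc_minimizers g a b) \<and> card (loc_minimizers g a b) = card (loc_minimizers f a b) \<and>
    clust_dist P (modal_clustering g a b) (modal_clustering f a b) =
      (\<Sum>j<length min_list. \<bar>cdf (sorted_list_of_set (loc_minimizers g a b) ! j) - cdf (min_list ! j)\<bar>)"
proof -
  obtain \<phi> where \<phi>: "loc_minimizers g a b = \<phi> ` loc_minimizers f a b"
      "strict_mono_on (loc_minimizers f a b) \<phi>" "\<And>z. z \<in> loc_minimizers f a b \<Longrightarrow> \<bar>\<phi> z - z\<bar> < \<delta>"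
    using loc_minimizers_g_image by blast
  let ?k = "length min_list"
  define l where "l = map \<phi> min_list"
  have sorted_g: "sorted_list_of_set (loc_minimizers g a b) = l"
    unfolding \<phi>(1) l_def min_list_def
    by (rule sorted_list_of_set_image_strict_mono[OF finite_loc_minimizers_f \<phi>(2)])
  have close: "\<bar>l ! j - min_list ! j\<bar> < \<delta>" if "j < ?k" for j
    using that \<phi>(3)[of "min_list ! j"] set_min_list nth_mem[of j min_list] by (auto simp: l_def)
  have "\<bar>cdf (l ! j) - cdf (min_list ! j)\<bar> \<le> B * \<delta>" if "j < ?k" for j
  proof -
    have "\<bar>cdf (l ! j) - cdf (min_list ! j)\<bar> \<le> B * \<bar>l ! j - min_list ! j\<bar>" by (rule lip)
    also have "\<dots> \<le> B * \<delta>" using close[OF that] \<open>0 \<le> B\<close> by (intro mult_left_mono) auto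
    finally show ?thesis .
  qed
  then have "(\<Sum>j<?k. \<bar>cdf (l ! j) - cdf (min_list ! j)\<bar>) \<le> ?k * (B * \<delta>)"
    using sum_bounded_above[of "{..<?k}" "\<lambda>j. \<bar>cdf (l ! j) - cdf (min_list ! j)\<bar>" "B * \<delta>"] by simp
  then have small: "4 * (\<Sum>j<?k. \<bar>cdf (l ! j) - cdf (min_list ! j)\<bar>) \<le> measure P (cell min_list i)"
    if "i \<le> ?k" for i
    using mass[OF that] by (simp add: mult.assoc)
  have set_l: "set l = loc_minimizers g a b" using \<phi>(1) set_min_list by (simp add: l_def)
  have "clust_dist P (cells l) (cells min_list) = (\<Sum>j<?k. \<bar>cdf (l ! j) - cdf (min_list ! j)\<bar>)"
  proof (rule clust_dist_cells_eq_sum)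
    show "length l = ?k" by (simp add: l_def)
    show "sorted min_list" using sorted_min_list by (rule strict_sorted_imp_sorted)
    show "set l \<subseteq> {a<..<b}" unfolding set_l by (auto simp: loc_minimizers_def)
    show "set min_list \<subseteq> {a<..<b}" by (rule set_min_list_subset_Ioo)
    show "max (lower l i) (lower min_list i) < min (upper l i) (upper min_list i)" if "i \<le> ?k" for i
      using that close by (intro cell_bounds_interleave[OF admissible]) (simp_all add: l_def)
  qed (use small in simp_all)
  moreover have "finite (loc_minimizers g a b)"
    using \<phi>(1) finite_loc_minimizers_f by simp
  moreover have "card (loc_minimizers g a b) = card (loc_minimizers f a b)"
    using \<phi>(1,2) by (simp add: card_image strict_mono_on_imp_inj_on)
  ultimately show ?thesis
    unfolding modal_clustering_eq_cells sorted_g min_list_def[symmetric] by simp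
qed

end

context nondegenerate_density
begin

lemma admissible_radius_small_wrt_cells:
  fixes B :: real
  assumes "0 < B"
  shows "\<exists>\<delta>. admissible_radius \<delta> \<and>
    (\<forall>i\<le>length min_list. 4 * (length min_list * B * \<delta>) \<le> measure P (cell min_list i))"
proof -
  let ?k = "length min_list"
  define \<mu> where "\<mu> = Min ((\<lambda>i. measure P (cell min_list i)) ` {..?k})"
  have "0 < \<mu>"
    unfolding \<mu>_def using measure_cell_min_list_pos by (subst Min_gr_iff) auto
  have denom_pos: "0 < 4 * (?k * B + 1)"
    using assms by (intro mult_pos_pos add_nonneg_pos) auto
  with \<open>0 < \<mu>\<close> have "0 < \<mu> / (4 * (?k * B + 1))" by simp
  from eventually_at_right_0_imp_ex[OF eventually_conj[OF eventually_admissible_radius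
      eventually_less_at_right_0[OF this]]]
  obtain \<delta> where \<delta>: "admissible_radius \<delta>" "\<delta> < \<mu> / (4 * (?k * B + 1))" by blast
  have "4 * (?k * B * \<delta>) \<le> measure P (cell min_list i)" if "i \<le> ?k" for i
  proof -
    have "4 * (?k * B * \<delta>) \<le> \<delta> * (4 * (?k * B + 1))"
      using admissible_radiusD(1)[OF \<delta>(1)] by (simp add: algebra_simps)
    also have "\<dots> < \<mu>" using \<delta>(2) denom_pos by (simp add: pos_less_divide_eq)
    also have "\<mu> \<le> measure P (cell min_list i)"
      unfolding \<mu>_def using that by (intro Min_le) auto
    finally show ?thesis by simp
  qed
  with \<delta>(1) show ?thesis by blast
qed

lemma eventually_clust_dist_eq_sum:
  fixes g g' g'' :: "nat \<Rightarrow> real \<Rightarrow> real"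
  assumes d1: "\<And>n x. x \<in> {a..b} \<Longrightarrow> (g n has_real_derivative g' n x) (at x within {a..b})"
    and d2: "\<And>n x. x \<in> {a..b} \<Longrightarrow> (g' n has_real_derivative g'' n x) (at x within {a..b})"
    and cont: "\<And>n. continuous_on {a..b} (g'' n)"
    and lim1: "(\<lambda>n. SUP x\<in>{a..b}. \<bar>g' n x - f1 x\<bar>) \<longlonglongrightarrow> 0"
    and lim2: "(\<lambda>n. SUP x\<in>{a..b}. \<bar>g'' n x - f2 x\<bar>) \<longlonglongrightarrow> 0"
  shows "eventually (\<lambda>n. finite (loc_minimizers (g n) a b) \<and>
      card (loc_minimizers (g n) a b) = card (loc_minimizers f a b) \<and>
      clust_dist P (modal_clustering (g n) a b) (modal_clustering f a b) =
        (\<Sum>j<length min_list. \<bar>cdf (sorted_list_of_set (loc_minimizers (g n) a b) ! j) - cdf (min_list ! j)\<bar>))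
    sequentially"
proof -
  obtain B where "0 < B" and lip: "\<And>s t. \<bar>cdf t - cdf s\<bar> \<le> B * \<bar>t - s\<bar>"
    using cdf_lipschitz by blast
  obtain \<delta> where \<delta>: "admissible_radius \<delta>"
    and mass: "\<And>i. i \<le> length min_list \<Longrightarrow> 4 * (length min_list * B * \<delta>) \<le> measure P (cell min_list i)"
    using admissible_radius_small_wrt_cells[OF \<open>0 < B\<close>] by blast
  have "0 < \<delta>" by (rule admissible_radiusD(1)[OF \<delta>])
  obtain \<eta> where "0 < \<eta>" and \<eta>: "\<forall>y\<in>{a..b}. (\<forall>z\<in>crit. \<delta> \<le> \<bar>y - z\<bar>) \<longrightarrow> \<eta> \<le> \<bar>f1 y\<bar>"
    using f1_bounded_away_from_crit[OF \<open>0 < \<delta>\<close>] by blast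
  obtain c where "0 < c" and c: "\<forall>z\<in>crit. c \<le> \<bar>f2 z\<bar> / 2"
    using f2_bounded_away_on_crit by blast
  have "eventually (\<lambda>n. (SUP x\<in>{a..b}. \<bar>g' n x - f1 x\<bar>) < \<eta> \<and> (SUP x\<in>{a..b}. \<bar>g'' n x - f2 x\<bar>) < c)
      sequentially"
    using order_tendstoD(2)[OF lim1 \<open>0 < \<eta>\<close>] order_tendstoD(2)[OF lim2 \<open>0 < c\<close>] by (rule eventually_conj)
  then show ?thesis
  proof eventually_elim
    case (elim n)
    have close1: "\<bar>g' n y - f1 y\<bar> < \<eta>" if "y \<in> {a..b}" for y
    proof -
      have "continuous_on {a..b} (\<lambda>x. \<bar>g' n x - f1 x\<bar>)"
        using continuous_on_if_DERIV_within[OF d2] f1_continuous by (intro continuous_intros)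
      from le_SUP_if_continuous_on_Icc[OF this that] elim show ?thesis by simp
    qed
    have close2: "\<bar>g'' n y - f2 y\<bar> < c" if "y \<in> {a..b}" for y
    proof -
      have "continuous_on {a..b} (\<lambda>x. \<bar>g'' n x - f2 x\<bar>)"
        using cont f2_continuous by (intro continuous_intros)
      from le_SUP_if_continuous_on_Icc[OF this that] elim show ?thesis by simp
    qed
    interpret perturbed_density f f1 f2 a b "g n" "g' n" "g'' n" \<delta> \<eta> c
      using \<delta>(1) \<eta> c d1 d2 close1 close2 by unfold_locales auto
    show ?case using clust_dist_perturbed[OF less_imp_le[OF \<open>0 < B\<close>] lip mass] by simp
  qed
qed

end

theorem mainTheorem3:
  fixes f f1 f2 f3 :: "real \<Rightarrow> real" and a b :: real
    and M :: "'w measure"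
    and fhat fhat1 fhat2 :: "nat \<Rightarrow> 'w \<Rightarrow> real \<Rightarrow> real"
  assumes "a < b"
    and f_nonneg: "\<And>x. f x \<ge> 0"
    and P_prob: "prob_space (density lborel (\<lambda>x. ennreal (f x)))"
    and f_zero: "\<And>x. x \<notin> {a..b} \<Longrightarrow> f x = 0"
    and f_d1: "\<And>x. x \<in> {a..b} \<Longrightarrow> (f has_real_derivative f1 x) (at x within {a..b})"
    and f_d2: "\<And>x. x \<in> {a..b} \<Longrightarrow> (f1 has_real_derivative f2 x) (at x within {a..b})"
    and f_d3: "\<And>x. x \<in> {a..b} \<Longrightarrow> (f2 has_real_derivative f3 x) (at x within {a..b})"
    and f3_cont: "continuous_on {a..b} f3"
    and "f1 a \<noteq> 0" and "f1 b \<noteq> 0"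
    and crit_fin: "finite {x \<in> {a<..<b}. f1 x = 0}"
    and crit_nondeg: "\<And>x. x \<in> {a<..<b} \<Longrightarrow> f1 x = 0 \<Longrightarrow> f2 x \<noteq> 0"
    and M_prob: "prob_space M"
    and fhat_d1: "\<And>n \<omega> x. x \<in> {a..b} \<Longrightarrow>
        (fhat n \<omega> has_real_derivative fhat1 n \<omega> x) (at x within {a..b})"
    and fhat_d2: "\<And>n \<omega> x. x \<in> {a..b} \<Longrightarrow>
        (fhat1 n \<omega> has_real_derivative fhat2 n \<omega> x) (at x within {a..b})"
    and fhat2_cont: "\<And>n \<omega>. continuous_on {a..b} (fhat2 n \<omega>)"
    and conv: "AE \<omega> in M.
        (\<lambda>n. SUP x\<in>{a..b}. \<bar>fhat1 n \<omega> x - f1 x\<bar>) \<longlonglongrightarrow> 0 \<and>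
        (\<lambda>n. SUP x\<in>{a..b}. \<bar>fhat2 n \<omega> x - f2 x\<bar>) \<longlonglongrightarrow> 0"
  shows "AE \<omega> in M. \<exists>n0. \<forall>n\<ge>n0.
           finite (loc_minimizers (fhat n \<omega>) a b) \<and>
           card (loc_minimizers (fhat n \<omega>) a b) = card (loc_minimizers f a b) \<and>
           (let P = density lborel (\<lambda>x. ennreal (f x));
                F = (\<lambda>t. measure P {..t});
                mh = sorted_list_of_set (loc_minimizers (fhat n \<omega>) a b);
                m = sorted_list_of_set (loc_minimizers f a b)
            in clust_dist P (modal_clustering (fhat n \<omega>) a b) (modal_clustering f a b)
               = (\<Sum>j<length m. \<bar>F (mh ! j) - F (m ! j)\<bar>))"
proof -
  \<comment> \<open>the third derivative only serves to make \<open>f2\<close> continuous\<close>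
  have "continuous_on {a..b} f2"
    using continuous_on_if_DERIV_within f_d3 by blast
  interpret nondegenerate_density f f1 f2 a b
    by (rule nondegenerate_density.intro) (fact assms \<open>continuous_on {a..b} f2\<close>)+
  note eventually_for_\<omega> = eventually_clust_dist_eq_sum[where g = "\<lambda>n. fhat n \<omega>" and g' = "\<lambda>n. fhat1 n \<omega>"
      and g'' = "\<lambda>n. fhat2 n \<omega>" for \<omega>, OF fhat_d1 fhat_d2 fhat2_cont,
      unfolded eventually_sequentially cdf_def min_list_def]
  show ?thesis
    using conv by (rule eventually_mono) (simp only: Let_def eventually_for_\<omega>)
qed

end
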